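(* Let $\Sigma$ be a ranked alphabet, $B$ a strong bimonoid, $\mathcal{A}=(Q,\delta,F)$ a $(\Sigma,B)$-wta and $q_1,\dots,q_n$ an enumeration of the elements of $Q$. Then there is a final variant $\mathcal{C}$ of $\mathrm{acc}\big(\Pi\big((\mathrm{der}(h^{q_i}_{\mathrm{V}(\mathcal{A})})\mid i\in[n])\big)\big)$ such that $\mathcal{N}(\mathcal{A})$ and $\mathcal{C}$ are isomorphic.
   Context: Ranked alphabet $\Sigma$ ($\Sigma^{(0)}\ne\emptyset$), trees $T_\Sigma$; strong bimonoid $(B,\oplus,\otimes,\mathbb{0},\mathbb{1})$ (commutative monoid $(B,\oplus,\mathbb{0})$, monoid $(B,\otimes,\mathbb{1})$, $\mathbb{0}\ne\mathbb{1}$, $\mathbb{0}$ absorbing, no distributivity). $(\Sigma,B)$-wta $\mathcal{A}=(Q,\delta,F)$: $Q$ finite nonempty, $\delta_k:Q^k\times\Sigma^{(k)}\times Q\to B$, $F:Q\to B$. Vector algebra $\mathrm{V}(\mathcal{A})=(B^Q,\delta_{\mathcal{A}})$, $\delta_{\mathcal{A}}(\sigma)(v_1,\dots,v_k)_q=\bigoplus_{p_1,\dots,p_k}\big(\bigotimes_{i=1}^k(v_i)_{p_i}\big)\otimes\delta_k(p_1\dots p_k,\sigma,q)$; $h_{\mathrm{V}(\mathcal{A})}:T_\Sigma\to B^Q$ the unique homomorphism from the term algebra; $h^q_{\mathrm{V}(\mathcal{A})}:T_\Sigma\to B$, $h^q_{\mathrm{V}(\mathcal{A})}(\xi)=h_{\mathrm{V}(\mathcal{A})}(\xi)_q$.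 A $(\Sigma,B)$-algebra is $\mathcal{K}=(P,\theta,G)$, $(P,\theta)$ a $\Sigma$-algebra, $G:P\to B$; $h_{\mathcal{K}}:T_\Sigma\to P$ the unique homomorphism. A final variant of $\mathcal{K}$ is $(P,\theta,G')$ for any $G':P\to B$. $\mathrm{acc}(\mathcal{K})$ is the $(\Sigma,B)$-subalgebra with carrier $\mathrm{im}(h_{\mathcal{K}})$ (the smallest subalgebra), restricted operations and restricted $G$. Two $(\Sigma,B)$-algebras $(P,\theta,G)$, $(P',\theta',G')$ are isomorphic if there is a bijective $\Sigma$-algebra homomorphism $\varphi:P\to P'$ with $G_p=G'_{\varphi(p)}$ for all $p$. Direct product $\Pi((\mathcal{K}_i)_{i\in[n]})$ of $\mathcal{K}_i=(P_i,\theta_i,G_i)$: carrier $P_1\times\dots\times P_n$, componentwise operations, root weight $(p_1,\dots,p_n)\mapsto\bigotimes_{i=1}^n(G_i)_{p_i}$. Contexts: trees over $\Sigma\cup\{\square\}$ with exactly one occurrence of the new nullary symbol $\square$ (set $C_\Sigma$); $c[\xi]$ substitutes $\xi$ for $\square$. For $r:T_\Sigma\to B$ and $\xi\in T_\Sigma$, $\xi^{-1}r:C_\Sigma\to B$, $(\xi^{-1}r)(c)=r(c[\xi])$. The derivative algebra $\mathrm{der}(r)$ has carrier $\{\xi^{-1}r\mid\xi\in T_\Sigma\}$, operations $\theta(\sigma)(\xi_1^{-1}r,\dots,\xi_k^{-1}r)=\sigma(\xi_1,\dots,\xi_k)^{-1}r$, root weights $\xi^{-1}r\mapsto r(\xi)$.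 Nerode algebra $\mathcal{N}(\mathcal{A})=(Q_{\mathcal{N}},\theta_{\mathcal{N}},F_{\mathcal{N}})$: smallest subalgebra of $\mathrm{V}(\mathcal{A})$ with $(F_{\mathcal{N}})_v=\bigoplus_q v_q\otimes F_q$. *)

theory Defs
  imports Main
begin

text \<open>Strong bimonoids are rendered by the type class combination
  comm_monoid_add (the commutative monoid (B,+,0)), monoid_mult (the monoid (B,*,1)),
  mult_zero (0 absorbing) and zero_neq_one (0 differs from 1); no distributivity.\<close>

definition ranked_alphabet :: "('f \<Rightarrow> nat) \<Rightarrow> bool" where
  "ranked_alphabet rk \<longleftrightarrow> finite (UNIV :: 'f set) \<and> (\<exists>f. rk f = 0)"

datatype 'f tree = Nd 'f "'f tree list"

fun wf_tree :: "('f \<Rightarrow> nat) \<Rightarrow> 'f tree \<Rightarrow> bool" where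
  "wf_tree rk (Nd f ts) \<longleftrightarrow> length ts = rk f \<and> (\<forall>t \<in> set ts. wf_tree rk t)"

definition trees :: "('f \<Rightarrow> nat) \<Rightarrow> 'f tree set" where
  "trees rk = {t. wf_tree rk t}"

text \<open>Contexts: trees over the alphabet extended by the nullary box (None),
  with exactly one occurrence of the box.\<close>
definition rk_box :: "('f \<Rightarrow> nat) \<Rightarrow> 'f option \<Rightarrow> nat" where
  "rk_box rk x = (case x of None \<Rightarrow> 0 | Some f \<Rightarrow> rk f)"

fun box_count :: "'f option tree \<Rightarrow> nat" where
  "box_count (Nd None ts) = Suc (sum_list (map box_count ts))"
| "box_count (Nd (Some f) ts) = sum_list (map box_count ts)"

definition contexts :: "('f \<Rightarrow> nat) \<Rightarrow> 'f option tree set" where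
  "contexts rk = {c. wf_tree (rk_box rk) c \<and> box_count c = 1}"

fun subst :: "'f option tree \<Rightarrow> 'f tree \<Rightarrow> 'f tree" where
  "subst (Nd None ts) \<xi> = \<xi>"
| "subst (Nd (Some f) ts) \<xi> = Nd f (map (\<lambda>t. subst t \<xi>) ts)"

text \<open>A (Sigma,B)-algebra: carrier, operations (theta f applied to a list of
  rk f arguments) and root weight.  Only the values on the carrier matter.\<close>
record ('f, 'a, 'b) salg =
  car :: "'a set"
  ops :: "'f \<Rightarrow> 'a list \<Rightarrow> 'a"
  rw  :: "'a \<Rightarrow> 'b"

definition is_salg :: "('f \<Rightarrow> nat) \<Rightarrow> ('f, 'a, 'b) salg \<Rightarrow> bool" where
  "is_salg rk K \<longleftrightarrow> (\<forall>f ps. length ps = rk f \<and> set ps \<subseteq> car K \<longrightarrow> ops K f ps \<in> car K)"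

fun eval :: "('f \<Rightarrow> 'a list \<Rightarrow> 'a) \<Rightarrow> 'f tree \<Rightarrow> 'a" where
  "eval \<theta> (Nd f ts) = \<theta> f (map (eval \<theta>) ts)"

definition hom_K :: "('f, 'a, 'b) salg \<Rightarrow> 'f tree \<Rightarrow> 'a" where
  "hom_K K = eval (ops K)"

definition acc :: "('f \<Rightarrow> nat) \<Rightarrow> ('f, 'a, 'b) salg \<Rightarrow> ('f, 'a, 'b) salg" where
  "acc rk K = \<lparr>car = hom_K K ` trees rk, ops = ops K, rw = rw K\<rparr>"

definition final_variant :: "('f, 'a, 'b) salg \<Rightarrow> ('a \<Rightarrow> 'b) \<Rightarrow> ('f, 'a, 'b) salg" where
  "final_variant K G' = \<lparr>car = car K, ops = ops K, rw = G'\<rparr>"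

definition salg_iso :: "('f \<Rightarrow> nat) \<Rightarrow> ('f, 'a, 'b) salg \<Rightarrow> ('f, 'c, 'b) salg \<Rightarrow> bool" where
  "salg_iso rk K K' \<longleftrightarrow> (\<exists>\<phi>. bij_betw \<phi> (car K) (car K')
     \<and> (\<forall>f ps. length ps = rk f \<and> set ps \<subseteq> car K \<longrightarrow> \<phi> (ops K f ps) = ops K' f (map \<phi> ps))
     \<and> (\<forall>p \<in> car K. rw K p = rw K' (\<phi> p)))"

text \<open>Direct product of a finite list of (Sigma,B)-algebras (same carrier type);
  tuples are lists of length n; root weight is the ordered product.\<close>
definition dprod :: "('f, 'a, 'b::monoid_mult) salg list \<Rightarrow> ('f, 'a list, 'b) salg" where
  "dprod Ks = \<lparr>car = {ps. length ps = length Ks \<and> (\<forall>i < length Ks. ps ! i \<in> car (Ks ! i))},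
     ops = (\<lambda>f vs. map (\<lambda>i. ops (Ks ! i) f (map (\<lambda>v. v ! i) vs)) [0..<length Ks]),
     rw = (\<lambda>ps. prod_list (map (\<lambda>i. rw (Ks ! i) (ps ! i)) [0..<length Ks]))\<rparr>"

text \<open>xi^{-1} r as a function on contexts (value 0 outside the set of contexts).\<close>
definition deriv :: "('f \<Rightarrow> nat) \<Rightarrow> ('f tree \<Rightarrow> 'b::zero) \<Rightarrow> 'f tree \<Rightarrow> ('f option tree \<Rightarrow> 'b)" where
  "deriv rk r \<xi> = (\<lambda>c. if c \<in> contexts rk then r (subst c \<xi>) else 0)"

definition der_rep :: "('f \<Rightarrow> nat) \<Rightarrow> ('f tree \<Rightarrow> 'b::zero) \<Rightarrow> ('f option tree \<Rightarrow> 'b) \<Rightarrow> 'f tree" where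
  "der_rep rk r d = (SOME \<xi>. \<xi> \<in> trees rk \<and> deriv rk r \<xi> = d)"

definition der :: "('f \<Rightarrow> nat) \<Rightarrow> ('f tree \<Rightarrow> 'b::zero) \<Rightarrow> ('f, 'f option tree \<Rightarrow> 'b, 'b) salg" where
  "der rk r = \<lparr>car = deriv rk r ` trees rk,
     ops = (\<lambda>f ds. deriv rk r (Nd f (map (der_rep rk r) ds))),
     rw = (\<lambda>d. r (der_rep rk r d))\<rparr>"

text \<open>A wta over a finite state type 'q: transition weights delta ps f q
  (meaningful for length ps = rk f) and root weights F.\<close>
definition vec_ops :: "('q::finite list \<Rightarrow> 'f \<Rightarrow> 'q \<Rightarrow> 'b::{comm_monoid_add, monoid_mult})
    \<Rightarrow> 'f \<Rightarrow> ('q \<Rightarrow> 'b) list \<Rightarrow> ('q \<Rightarrow> 'b)" where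
  "vec_ops \<delta> f vs = (\<lambda>q. \<Sum>ps \<in> {ps. length ps = length vs}.
       prod_list (map2 (\<lambda>v p. v p) vs ps) * \<delta> ps f q)"

definition hV :: "('q::finite list \<Rightarrow> 'f \<Rightarrow> 'q \<Rightarrow> 'b::{comm_monoid_add, monoid_mult})
    \<Rightarrow> 'f tree \<Rightarrow> ('q \<Rightarrow> 'b)" where
  "hV \<delta> = eval (vec_ops \<delta>)"

definition nerode :: "('f \<Rightarrow> nat) \<Rightarrow> ('q::finite list \<Rightarrow> 'f \<Rightarrow> 'q \<Rightarrow> 'b::{comm_monoid_add, monoid_mult})
    \<Rightarrow> ('q \<Rightarrow> 'b) \<Rightarrow> ('f, 'q \<Rightarrow> 'b, 'b) salg" where
  "nerode rk \<delta> F = acc rk \<lparr>car = UNIV, ops = vec_ops \<delta>, rw = (\<lambda>v. \<Sum>q\<in>UNIV. v q * F q)\<rparr>"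

end

theory Submission
  imports Defs
begin

(* Both algebras are accessible, i.e. images of the term algebra under a homomorphism:
   h_V for the Nerode algebra and xi |-> (xi^-1 h^q)_q for the product of derivative algebras.
   Two accessible algebras are isomorphic up to root weights as soon as their homomorphisms
   have the same kernel.  If h_V(xi) = h_V(xi') then h_V(c[xi]) = h_V(c[xi']) for every
   context c, so all derivatives agree; conversely, evaluating the derivatives at the trivial
   context recovers h_V(xi)_q for every state q. *)

fun lift_tree :: "'f tree \<Rightarrow> 'f option tree" where
  "lift_tree (Nd f ts) = Nd (Some f) (map lift_tree ts)"

lemma box_count_lift_tree: "box_count (lift_tree t) = 0"
  by (induction t) (auto simp: comp_def intro!: sum_list_eq_0_iff[THEN iffD2])

lemma subst_lift_tree: "subst (lift_tree t) \<xi> = t"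
  by (induction t) (auto simp: comp_def intro: map_idI)

lemma wf_tree_lift_tree: "wf_tree rk t \<Longrightarrow> wf_tree (rk_box rk) (lift_tree t)"
  by (induction t) (auto simp: rk_box_def)

fun ctx_comp :: "'f option tree \<Rightarrow> 'f option tree \<Rightarrow> 'f option tree" where
  "ctx_comp (Nd None ts) d = d"
| "ctx_comp (Nd (Some f) ts) d = Nd (Some f) (map (\<lambda>t. ctx_comp t d) ts)"

lemma subst_ctx_comp: "subst (ctx_comp c d) \<xi> = subst c (subst d \<xi>)"
  by (induction c d rule: ctx_comp.induct) auto

lemma wf_tree_ctx_comp:
  "wf_tree (rk_box rk) c \<Longrightarrow> wf_tree (rk_box rk) d \<Longrightarrow> wf_tree (rk_box rk) (ctx_comp c d)"
  by (induction c d rule: ctx_comp.induct) (auto simp: rk_box_def)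

lemma box_count_ctx_comp:
  "wf_tree (rk_box rk) c \<Longrightarrow> box_count (ctx_comp c d) = box_count c * box_count d"
proof (induction c d rule: ctx_comp.induct)
  case (1 ts d)
  then show ?case by (simp add: rk_box_def)
next
  case (2 f ts d)
  then have "(\<Sum>t\<leftarrow>ts. box_count (ctx_comp t d)) = (\<Sum>t\<leftarrow>ts. box_count t * box_count d)"
    by (intro arg_cong[where f = sum_list] map_cong) (auto simp: rk_box_def)
  then show ?case by (simp add: comp_def sum_list_mult_const)
qed

lemma ctx_comp_in_contexts:
  "c \<in> contexts rk \<Longrightarrow> d \<in> contexts rk \<Longrightarrow> ctx_comp c d \<in> contexts rk"
  using box_count_ctx_comp[of rk c d] by (simp add: contexts_def wf_tree_ctx_comp)

lemma Nd_in_trees_iff: "Nd f ts \<in> trees rk \<longleftrightarrow> length ts = rk f \<and> set ts \<subseteq> trees rk"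
  by (auto simp: trees_def)

lemma deriv_subst_cong:
  assumes "c \<in> contexts rk" and "deriv rk r a = deriv rk r b"
  shows "deriv rk r (subst c a) = deriv rk r (subst c b)"
proof
  fix d
  show "deriv rk r (subst c a) d = deriv rk r (subst c b) d"
  proof (cases "d \<in> contexts rk")
    case True
    then have "ctx_comp d c \<in> contexts rk"
      using assms(1) by (rule ctx_comp_in_contexts)
    then show ?thesis
      using fun_cong[OF assms(2), of "ctx_comp d c"] by (simp add: deriv_def subst_ctx_comp)
  qed (simp add: deriv_def)
qed

lemma deriv_Nd_cong_single:
  assumes "deriv rk r a = deriv rk r b"
    and "set xs \<subseteq> trees rk" "set ys \<subseteq> trees rk" "length xs + Suc (length ys) = rk f"
  shows "deriv rk r (Nd f (xs @ a # ys)) = deriv rk r (Nd f (xs @ b # ys))"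
proof -
  define c where "c = Nd (Some f) (map lift_tree xs @ Nd None [] # map lift_tree ys)"
  have "c \<in> contexts rk"
    using assms(2-4)
    by (auto simp: c_def contexts_def rk_box_def trees_def wf_tree_lift_tree box_count_lift_tree
        comp_def intro!: sum_list_eq_0_iff[THEN iffD2])
  moreover have "subst c \<xi> = Nd f (xs @ \<xi> # ys)" for \<xi>
    by (simp add: c_def comp_def subst_lift_tree)
  ultimately show ?thesis
    using deriv_subst_cong[OF _ assms(1)] by metis
qed

lemma deriv_Nd_cong:
  assumes "list_all2 (\<lambda>a b. deriv rk r a = deriv rk r b) ts us"
    and "set ts \<subseteq> trees rk" "set us \<subseteq> trees rk" "length ts = rk f"
  shows "deriv rk r (Nd f ts) = deriv rk r (Nd f us)"
proof -
  have "deriv rk r (Nd f (xs @ ts)) = deriv rk r (Nd f (xs @ us))"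
    if "set xs \<subseteq> trees rk" "length xs + length ts = rk f" for xs
    using assms(1-3) that
  proof (induction arbitrary: xs rule: list_all2_induct)
    case (Cons a ts b us)
    have "deriv rk r (Nd f (xs @ a # ts)) = deriv rk r (Nd f (xs @ b # ts))"
      using Cons by (intro deriv_Nd_cong_single) auto
    also have "\<dots> = deriv rk r (Nd f ((xs @ [b]) @ ts))"
      by simp
    also have "\<dots> = deriv rk r (Nd f ((xs @ [b]) @ us))"
      using Cons.prems by (intro Cons.IH) auto
    finally show ?case by simp
  qed simp
  from this[of "[]"] assms(4) show ?thesis by simp
qed

lemma der_rep_deriv:
  assumes "\<xi> \<in> trees rk"
  shows "der_rep rk r (deriv rk r \<xi>) \<in> trees rk"
    and "deriv rk r (der_rep rk r (deriv rk r \<xi>)) = deriv rk r \<xi>"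
  using someI[of "\<lambda>\<zeta>. \<zeta> \<in> trees rk \<and> deriv rk r \<zeta> = deriv rk r \<xi>", OF conjI[OF assms refl]]
  by (simp_all add: der_rep_def)

lemma ops_der_deriv:
  assumes "set ts \<subseteq> trees rk" "length ts = rk f"
  shows "ops (der rk r) f (map (deriv rk r) ts) = deriv rk r (Nd f ts)"
proof -
  have "deriv rk r (Nd f (map (der_rep rk r \<circ> deriv rk r) ts)) = deriv rk r (Nd f ts)"
    using assms der_rep_deriv[of _ rk r]
    by (intro deriv_Nd_cong) (auto simp: list_all2_conv_all_nth subset_iff)
  then show ?thesis by (simp add: der_def)
qed

lemma hom_K_der: "\<xi> \<in> trees rk \<Longrightarrow> hom_K (der rk r) \<xi> = deriv rk r \<xi>"
proof (induction \<xi>)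
  case (Nd f ts)
  then have ts: "set ts \<subseteq> trees rk" "length ts = rk f"
    by (auto simp: Nd_in_trees_iff)
  have "hom_K (der rk r) (Nd f ts) = ops (der rk r) f (map (hom_K (der rk r)) ts)"
    by (simp add: hom_K_def)
  also have "\<dots> = ops (der rk r) f (map (deriv rk r) ts)"
    using Nd.IH ts by (auto simp: subset_iff intro!: arg_cong[where f = "ops (der rk r) f"])
  also have "\<dots> = deriv rk r (Nd f ts)"
    using ts by (rule ops_der_deriv)
  finally show ?case .
qed

lemma hom_K_dprod: "hom_K (dprod Ks) \<xi> = map (\<lambda>K. hom_K K \<xi>) Ks"
proof (induction \<xi>)
  case (Nd f ts)
  have "hom_K (dprod Ks) (Nd f ts)
      = map (\<lambda>i. ops (Ks ! i) f (map (\<lambda>v. v ! i) (map (hom_K (dprod Ks)) ts))) [0..<length Ks]"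
    by (simp add: hom_K_def dprod_def)
  also have "\<dots> = map (\<lambda>i. ops (Ks ! i) f (map (hom_K (Ks ! i)) ts)) [0..<length Ks]"
    using Nd.IH by (auto intro!: arg_cong[where f = "ops (Ks ! _) f"])
  also have "\<dots> = map (\<lambda>K. hom_K K (Nd f ts)) Ks"
    by (simp add: hom_K_def map_nth[of Ks, symmetric, THEN arg_cong[where f = "map _"]] del: map_nth)
  finally show ?case .
qed

lemma eval_subst_cong: "eval \<theta> a = eval \<theta> b \<Longrightarrow> eval \<theta> (subst c a) = eval \<theta> (subst c b)"
proof (induction c a rule: subst.induct)
  case (2 f ts \<xi>)
  then show ?case
    by (auto simp: comp_def intro!: arg_cong[where f = "\<theta> f"])
qed simp

lemma deriv_components_eq_iff:
  fixes \<theta> :: "'f \<Rightarrow> ('q \<Rightarrow> 'b::zero) list \<Rightarrow> 'q \<Rightarrow> 'b"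
  shows "(\<forall>q. deriv rk (\<lambda>\<xi>. eval \<theta> \<xi> q) a = deriv rk (\<lambda>\<xi>. eval \<theta> \<xi> q) b)
    \<longleftrightarrow> eval \<theta> a = eval \<theta> b"
proof
  assume derivs_eq: "\<forall>q. deriv rk (\<lambda>\<xi>. eval \<theta> \<xi> q) a = deriv rk (\<lambda>\<xi>. eval \<theta> \<xi> q) b"
  have "Nd None [] \<in> contexts rk"
    by (simp add: contexts_def rk_box_def)
  then have "eval \<theta> a q = eval \<theta> b q" for q
    using fun_cong[OF spec[OF derivs_eq, of q], of "Nd None []"] by (simp add: deriv_def)
  then show "eval \<theta> a = eval \<theta> b" ..
next
  assume "eval \<theta> a = eval \<theta> b"
  then have "eval \<theta> (subst c a) = eval \<theta> (subst c b)" for c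
    by (rule eval_subst_cong)
  then show "\<forall>q. deriv rk (\<lambda>\<xi>. eval \<theta> \<xi> q) a = deriv rk (\<lambda>\<xi>. eval \<theta> \<xi> q) b"
    unfolding deriv_def by metis
qed

lemma acc_iso_final_variant:
  fixes K :: "('f, 'a, 'b) salg" and K' :: "('f, 'c, 'b) salg"
  assumes "\<And>a b. a \<in> trees rk \<Longrightarrow> b \<in> trees rk \<Longrightarrow> hom_K K a = hom_K K b \<longleftrightarrow> hom_K K' a = hom_K K' b"
  shows "\<exists>G'. salg_iso rk (acc rk K) (final_variant (acc rk K') G')"
proof -
  define pick where "pick = inv_into (trees rk) (hom_K K)"
  define \<phi> where "\<phi> = hom_K K' \<circ> pick"
  have \<phi>_hom_K: "\<phi> (hom_K K \<xi>) = hom_K K' \<xi>" if "\<xi> \<in> trees rk" for \<xi>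
    using assms[OF _ that, of "pick (hom_K K \<xi>)"] that
    by (simp add: \<phi>_def pick_def f_inv_into_f inv_into_into)
  have "bij_betw \<phi> (hom_K K ` trees rk) (hom_K K' ` trees rk)"
    by (auto simp: bij_betw_def inj_on_def image_image \<phi>_hom_K assms)
  moreover have "\<phi> (ops K f ps) = ops K' f (map \<phi> ps)"
    if "set ps \<subseteq> hom_K K ` trees rk" "length ps = rk f" for f ps
  proof -
    have ps: "ps = map (hom_K K) (map pick ps)" "set (map pick ps) \<subseteq> trees rk"
      using that by (auto simp: pick_def f_inv_into_f inv_into_into intro!: map_idI[symmetric])
    have "\<phi> (ops K f ps) = \<phi> (hom_K K (Nd f (map pick ps)))"
      by (subst ps(1)) (simp add: hom_K_def)
    also have "\<dots> = hom_K K' (Nd f (map pick ps))"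
      using ps(2) that(2) by (intro \<phi>_hom_K) (simp add: Nd_in_trees_iff)
    finally show ?thesis by (simp add: hom_K_def \<phi>_def)
  qed
  ultimately have "salg_iso rk (acc rk K)
      (final_variant (acc rk K') (rw K \<circ> inv_into (hom_K K ` trees rk) \<phi>))"
    by (auto simp: salg_iso_def acc_def final_variant_def bij_betw_def)
  then show ?thesis by blast
qed

theorem theorem6p7:
  fixes rk :: "'f \<Rightarrow> nat"
    and \<delta> :: "'q::finite list \<Rightarrow> 'f \<Rightarrow> 'q \<Rightarrow> 'b::{comm_monoid_add, monoid_mult, mult_zero, zero_neq_one}"
    and F :: "'q \<Rightarrow> 'b"
    and qs :: "'q list"
  assumes "ranked_alphabet rk"
    and "distinct qs" and "set qs = UNIV"
  shows "\<exists>G'. salg_iso rk (nerode rk \<delta> F)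
           (final_variant (acc rk (dprod (map (\<lambda>q. der rk (\<lambda>\<xi>. hV \<delta> \<xi> q)) qs))) G')"
proof -
  define V :: "('f, 'q \<Rightarrow> 'b, 'b) salg"
    where "V = \<lparr>car = UNIV, ops = vec_ops \<delta>, rw = (\<lambda>v. \<Sum>q\<in>UNIV. v q * F q)\<rparr>"
  define D where "D = dprod (map (\<lambda>q. der rk (\<lambda>\<xi>. hV \<delta> \<xi> q)) qs)"
  have hom_K_V: "hom_K V = hV \<delta>"
    by (simp add: V_def hom_K_def hV_def)
  have hom_K_D: "hom_K D \<xi> = map (\<lambda>q. deriv rk (\<lambda>\<xi>. hV \<delta> \<xi> q) \<xi>) qs" if "\<xi> \<in> trees rk" for \<xi>
    using that by (simp add: D_def hom_K_dprod hom_K_der)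
  have "hom_K V a = hom_K V b \<longleftrightarrow> hom_K D a = hom_K D b"
    if "a \<in> trees rk" "b \<in> trees rk" for a b
    using deriv_components_eq_iff[of rk "vec_ops \<delta>" a b] that assms(3)
    by (simp add: hom_K_V hom_K_D hV_def)
  then show ?thesis
    unfolding nerode_def V_def[symmetric] D_def[symmetric] by (rule acc_iso_final_variant)
qed

end
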